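(* Let $p,q$ be positive integers and let $m,s$ be positive integers. Then $G_{2^m s}$ has the same parity as $G_s$, and if $G_s$ is even then $\frac12 G_{2^m s}\equiv 1\pmod 2$.
   Context: $A=pq+2$, $B=\sqrt{A^2-4}$, $G_n=\left(\frac{A+B}{2}\right)^n+\left(\frac{A-B}{2}\right)^n$ (an integer). *)

theory Defs
  imports Complex_Main
begin

definition A_val :: "int \<Rightarrow> int \<Rightarrow> real" where
  "A_val p q = real_of_int (p * q + 2)"

definition B_val :: "int \<Rightarrow> int \<Rightarrow> real" where
  "B_val p q = sqrt ((A_val p q)^2 - 4)"

definition G :: "int \<Rightarrow> int \<Rightarrow> nat \<Rightarrow> real" where
  "G p q n = ((A_val p q + B_val p q) / 2) ^ n + ((A_val p q - B_val p q) / 2) ^ n"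

end

theory Submission
  imports Defs
begin

text \<open>With \<open>x = (A + B)/2\<close> and \<open>y = (A - B)/2\<close> we have \<open>x y = 1\<close> and \<open>x + y = A\<close>, so
  \<open>G n = x^n + y^n\<close> is the integer Lucas sequence with parameter \<open>A\<close>, and
  \<open>G (2 n) = (G n)^2 - 2\<close>. Hence \<open>G (2^m s)\<close> arises from \<open>G s\<close> by iterating
  \<open>v \<mapsto> v^2 - 2\<close> \<open>m\<close> times. This map preserves parity and sends every even number
  to one that is \<open>2\<close> modulo \<open>4\<close>.\<close>

lemma power_sum_Suc_Suc:
  fixes x y :: "'a::comm_ring_1"
  assumes "x * y = 1"
  shows "x ^ Suc (Suc n) + y ^ Suc (Suc n) = (x + y) * (x ^ Suc n + y ^ Suc n) - (x ^ n + y ^ n)"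
proof -
  have "x ^ Suc (Suc n) + y ^ Suc (Suc n)
        = (x + y) * (x ^ Suc n + y ^ Suc n) - (x * y) * (x ^ n + y ^ n)"
    by (simp add: algebra_simps)
  with assms show ?thesis by simp
qed

lemma power_sum_double:
  fixes x y :: "'a::comm_ring_1"
  assumes "x * y = 1"
  shows "x ^ (2 * n) + y ^ (2 * n) = (x ^ n + y ^ n)\<^sup>2 - 2"
proof -
  have "(x ^ n + y ^ n)\<^sup>2 = x ^ (2 * n) + y ^ (2 * n) + 2 * (x * y) ^ n"
    by (simp add: power2_eq_square power_mult_distrib algebra_simps flip: power_add mult_2)
  with assms show ?thesis by simp
qed

lemma quadratic_roots_mult_eq_1:
  fixes a :: real
  assumes "4 \<le> a\<^sup>2"
  shows "((a + sqrt (a\<^sup>2 - 4)) / 2) * ((a - sqrt (a\<^sup>2 - 4)) / 2) = 1"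
proof -
  have "(sqrt (a\<^sup>2 - 4))\<^sup>2 = a\<^sup>2 - 4"
    using assms by simp
  then show ?thesis
    by (simp add: field_simps power2_eq_square)
qed

fun lucas_V :: "int \<Rightarrow> nat \<Rightarrow> int" where
  "lucas_V a 0 = 2"
| "lucas_V a (Suc 0) = a"
| "lucas_V a (Suc (Suc n)) = a * lucas_V a (Suc n) - lucas_V a n"

lemma lucas_V_eq_power_sum:
  fixes a :: int and x y :: real
  assumes "x * y = 1" "x + y = of_int a"
  shows "of_int (lucas_V a n) = x ^ n + y ^ n"
proof (induction n rule: induct_nat_012)
  case (ge2 n)
  then show ?case
    using power_sum_Suc_Suc[OF assms(1), of n] by (simp add: assms(2))
qed (simp_all add: assms(2))

lemma lucas_V_double:
  assumes "4 \<le> a\<^sup>2"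
  shows "lucas_V a (2 * n) = (lucas_V a n)\<^sup>2 - 2"
proof -
  define x where "x = (of_int a + sqrt ((of_int a)\<^sup>2 - 4)) / (2 :: real)"
  define y where "y = (of_int a - sqrt ((of_int a)\<^sup>2 - 4)) / (2 :: real)"
  have "(4 :: real) \<le> (of_int a)\<^sup>2"
    using assms by (metis of_int_le_iff of_int_numeral of_int_power)
  then have xy: "x * y = 1"
    unfolding x_def y_def by (rule quadratic_roots_mult_eq_1)
  have "x + y = of_int a"
    unfolding x_def y_def by (simp add: field_simps)
  note V = lucas_V_eq_power_sum[OF xy this]
  have "real_of_int (lucas_V a (2 * n)) = real_of_int ((lucas_V a n)\<^sup>2 - 2)"
    unfolding of_int_diff of_int_power V power_sum_double[OF xy] by simp
  then show ?thesis
    by (simp only: of_int_eq_iff)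
qed

lemma G_eq_lucas_V:
  assumes "0 \<le> p * q"
  shows "G p q n = of_int (lucas_V (p * q + 2) n)"
proof -
  have "2 \<le> A_val p q"
    using assms unfolding A_val_def by linarith
  then have "2\<^sup>2 \<le> (A_val p q)\<^sup>2"
    by (rule power_mono) simp
  then have "4 \<le> (A_val p q)\<^sup>2"
    by simp
  then have xy: "(A_val p q + B_val p q) / 2 * ((A_val p q - B_val p q) / 2) = 1"
    unfolding B_val_def by (rule quadratic_roots_mult_eq_1)
  have "(A_val p q + B_val p q) / 2 + (A_val p q - B_val p q) / 2 = of_int (p * q + 2)"
    by (simp add: A_val_def field_simps)
  from lucas_V_eq_power_sum[OF xy this] show ?thesis
    unfolding G_def by simp
qed

definition square_minus_two :: "int \<Rightarrow> int" where
  "square_minus_two v = v\<^sup>2 - 2"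

lemma lucas_V_pow2_mult:
  assumes "4 \<le> a\<^sup>2"
  shows "lucas_V a (2 ^ m * s) = (square_minus_two ^^ m) (lucas_V a s)"
proof (induction m)
  case (Suc m)
  have "lucas_V a (2 ^ Suc m * s) = lucas_V a (2 * (2 ^ m * s))"
    by (simp add: mult.assoc)
  also have "\<dots> = square_minus_two (lucas_V a (2 ^ m * s))"
    unfolding square_minus_two_def by (rule lucas_V_double[OF assms])
  finally show ?case
    using Suc.IH by simp
qed simp

lemma even_funpow_square_minus_two_diff: "even ((square_minus_two ^^ m) v - v)"
proof (induction m)
  case (Suc m)
  let ?w = "(square_minus_two ^^ m) v"
  have "even (square_minus_two ?w - ?w)"
    by (simp add: square_minus_two_def power2_eq_square)
  then have "even (square_minus_two ?w - ?w + (?w - v))"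
    using Suc.IH by simp
  then show ?case
    by simp
qed simp

lemma funpow_square_minus_two_mod_4:
  assumes "even v" "m > 0"
  shows "(square_minus_two ^^ m) v mod 4 = 2"
  using assms(2)
proof (induction m rule: nat_induct_non_zero)
  have square_minus_two_mod_4: "square_minus_two w mod 4 = 2" if "even w" for w
  proof -
    from that obtain j where "w = 2 * j" by blast
    then have "square_minus_two w = 4 * (j\<^sup>2 - 1) + 2"
      by (simp add: square_minus_two_def power2_eq_square)
    then show ?thesis
      by presburger
  qed
  case 1
  show ?case
    using assms(1) by (simp add: square_minus_two_mod_4)
  case (Suc m)
  then have "even ((square_minus_two ^^ m) v)"
    by presburger
  then show ?case
    by (simp add: square_minus_two_mod_4)
qed

theorem lemma1:
  fixes p q :: int and m s :: nat
  assumes "p > 0" "q > 0" "m > 0" "s > 0"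
  shows "(\<exists>k::int. G p q (2^m * s) - G p q s = 2 * of_int k)
         \<and> ((\<exists>k::int. G p q s = 2 * of_int k) \<longrightarrow>
              (\<exists>k::int. G p q (2^m * s) / 2 = 2 * of_int k + 1))"
proof -
  define a where "a = p * q + 2"
  define v where "v = lucas_V a s"
  have pq: "0 \<le> p * q"
    using assms(1,2) by simp
  then have "2\<^sup>2 \<le> a\<^sup>2"
    unfolding a_def by (intro power_mono) simp_all
  then have V: "G p q (2 ^ m * s) = of_int ((square_minus_two ^^ m) v)"
    using G_eq_lucas_V[OF pq] lucas_V_pow2_mult by (simp add: a_def v_def)
  have Gs: "G p q s = of_int v"
    using G_eq_lucas_V[OF pq] by (simp add: a_def v_def)
  obtain k where "(square_minus_two ^^ m) v - v = 2 * k"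
    using even_funpow_square_minus_two_diff by blast
  then have "G p q (2 ^ m * s) - G p q s = 2 * of_int k"
    unfolding V Gs by (metis of_int_diff of_int_mult of_int_numeral)
  moreover have "\<exists>j::int. G p q (2 ^ m * s) / 2 = 2 * of_int j + 1"
    if "G p q s = 2 * of_int k'" for k'
  proof -
    have "v = 2 * k'"
      using that unfolding Gs by (metis of_int_eq_iff of_int_mult of_int_numeral)
    then have "(square_minus_two ^^ m) v mod 4 = 2"
      using funpow_square_minus_two_mod_4 assms(3) by simp
    then obtain j where "(square_minus_two ^^ m) v = 4 * j + 2"
      by (metis add.commute mult.commute mult_div_mod_eq)
    then show ?thesis
      unfolding V by simp
  qed
  ultimately show ?thesis
    by blast
qed

end
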